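(* Let $\mathbb{C}_1$ and $\mathbb{C}_2$ be locally small categories whose morphisms are all monomorphisms. Assume that for each $i\in\{1,2\}$ and all $A_i,B_i\in\mathrm{Ob}(\mathbb{C}_i)$ the set $\hom_{\mathbb{C}_i}(A_i,B_i)$ is finite and $t_{\mathbb{C}_i}(A_i)$ is finite. Then for all $A_1\in\mathrm{Ob}(\mathbb{C}_1)$ and $A_2\in\mathrm{Ob}(\mathbb{C}_2)$, $$t_{\mathbb{C}_1\times\mathbb{C}_2}(A_1,A_2)\le t_{\mathbb{C}_1}(A_1)\cdot t_{\mathbb{C}_2}(A_2),$$ and consequently $t^\sim_{\mathbb{C}_1\times\mathbb{C}_2}(A_1,A_2)\le t^\sim_{\mathbb{C}_1}(A_1)\cdot t^\sim_{\mathbb{C}_2}(A_2)$.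
   Context: $\mathbb{C}_1\times\mathbb{C}_2$ is the product category. For a category $\mathbb{C}$, $k\ge2$, $t\ge1$ and objects $A,B,C$: $C\to(B)^A_{k,t}$ means that for every $\chi:\hom(A,C)\to\{0,\dots,k-1\}$ there is $w\in\hom(B,C)$ with $|\chi(w\cdot\hom(A,B))|\le t$. $t_{\mathbb{C}}(A)$ is the least positive integer $n$ such that for all $k\ge2$ and all $B$ there is $C$ with $C\to(B)^A_{k,n}$, and $\infty$ if none exists. For $f,f'\in\hom(A,B)$ let $f\sim_A f'$ iff $f'=f\cdot\alpha$ for some $\alpha\in\mathrm{Aut}(A)$, $\binom{B}{A}=\hom(A,B)/{\sim_A}$, and $w\cdot(f/{\sim_A})=(w\cdot f)/{\sim_A}$. $C\overset{\sim}{\to}(B)^A_{k,t}$ means that for every $\chi:\binom{C}{A}\to\{0,\dots,k-1\}$ there is $w\in\hom(B,C)$ with $|\chi(w\cdot\binom{B}{A})|\le t$; $t^\sim_{\mathbb{C}}(A)$ is the least positive $n$ such that for all $k\ge2$ and all $B$ there is $C$ with $C\overset{\sim}{\to}(B)^A_{k,n}$, and $\infty$ otherwise. *)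

theory Defs
  imports Main "HOL-Library.Extended_Nat"
begin

text \<open>A (locally small) category given by its object set, hom-sets, composition
  (cmp g f = g after f) and identities.\<close>
record ('o, 'm) cat =
  Ob  :: "'o set"
  Hom :: "'o \<Rightarrow> 'o \<Rightarrow> 'm set"
  cmp :: "'m \<Rightarrow> 'm \<Rightarrow> 'm"
  idm :: "'o \<Rightarrow> 'm"

definition is_category :: "('o, 'm) cat \<Rightarrow> bool" where
  "is_category C \<longleftrightarrow>
     (\<forall>A\<in>Ob C. \<forall>B\<in>Ob C. \<forall>D\<in>Ob C. \<forall>f\<in>Hom C A B. \<forall>g\<in>Hom C B D.
         cmp C g f \<in> Hom C A D) \<and>
     (\<forall>A\<in>Ob C. \<forall>B\<in>Ob C. \<forall>D\<in>Ob C. \<forall>E\<in>Ob C.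
        \<forall>f\<in>Hom C A B. \<forall>g\<in>Hom C B D. \<forall>h\<in>Hom C D E.
         cmp C h (cmp C g f) = cmp C (cmp C h g) f) \<and>
     (\<forall>A\<in>Ob C. idm C A \<in> Hom C A A) \<and>
     (\<forall>A\<in>Ob C. \<forall>B\<in>Ob C. \<forall>f\<in>Hom C A B.
         cmp C (idm C B) f = f \<and> cmp C f (idm C A) = f) \<and>
     (\<forall>A\<in>Ob C. \<forall>B\<in>Ob C. \<forall>A'\<in>Ob C. \<forall>B'\<in>Ob C.
         Hom C A B \<inter> Hom C A' B' \<noteq> {} \<longrightarrow> A = A' \<and> B = B')"

definition all_mono :: "('o, 'm) cat \<Rightarrow> bool" where
  "all_mono C \<longleftrightarrow>
     (\<forall>A\<in>Ob C. \<forall>B\<in>Ob C. \<forall>D\<in>Ob C. \<forall>f\<in>Hom C B D. \<forall>g\<in>Hom C A B. \<forall>h\<in>Hom C A B.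
         cmp C f g = cmp C f h \<longrightarrow> g = h)"

definition prod_cat :: "('o1, 'm1) cat \<Rightarrow> ('o2, 'm2) cat \<Rightarrow> ('o1 \<times> 'o2, 'm1 \<times> 'm2) cat" where
  "prod_cat C1 C2 =
     \<lparr> Ob = Ob C1 \<times> Ob C2,
       Hom = (\<lambda>(A1, A2) (B1, B2). Hom C1 A1 B1 \<times> Hom C2 A2 B2),
       cmp = (\<lambda>(g1, g2) (f1, f2). (cmp C1 g1 f1, cmp C2 g2 f2)),
       idm = (\<lambda>(A1, A2). (idm C1 A1, idm C2 A2)) \<rparr>"

definition arrow :: "('o, 'm) cat \<Rightarrow> 'o \<Rightarrow> 'o \<Rightarrow> 'o \<Rightarrow> nat \<Rightarrow> nat \<Rightarrow> bool" where
  "arrow Cat C B A k t \<longleftrightarrow>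
     (\<forall>\<chi> :: 'm \<Rightarrow> nat. \<chi> ` Hom Cat A C \<subseteq> {..<k} \<longrightarrow>
        (\<exists>w\<in>Hom Cat B C.
           finite (\<chi> ` ((\<lambda>f. cmp Cat w f) ` Hom Cat A B)) \<and>
           card (\<chi> ` ((\<lambda>f. cmp Cat w f) ` Hom Cat A B)) \<le> t))"

definition ramsey_deg :: "('o, 'm) cat \<Rightarrow> 'o \<Rightarrow> enat" where
  "ramsey_deg Cat A =
     (let P = (\<lambda>n. 0 < n \<and> (\<forall>k\<ge>2. \<forall>B\<in>Ob Cat. \<exists>C\<in>Ob Cat. arrow Cat C B A k n))
      in if \<exists>n. P n then enat (LEAST n. P n) else \<infinity>)"

definition Aut :: "('o, 'm) cat \<Rightarrow> 'o \<Rightarrow> 'm set" where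
  "Aut Cat A = {\<alpha> \<in> Hom Cat A A. \<exists>\<beta>\<in>Hom Cat A A.
                    cmp Cat \<alpha> \<beta> = idm Cat A \<and> cmp Cat \<beta> \<alpha> = idm Cat A}"

definition cls :: "('o, 'm) cat \<Rightarrow> 'o \<Rightarrow> 'm \<Rightarrow> 'm set" where
  "cls Cat A f = (\<lambda>\<alpha>. cmp Cat f \<alpha>) ` Aut Cat A"

definition binom :: "('o, 'm) cat \<Rightarrow> 'o \<Rightarrow> 'o \<Rightarrow> 'm set set" where
  "binom Cat B A = cls Cat A ` Hom Cat A B"

definition arrow_sim :: "('o, 'm) cat \<Rightarrow> 'o \<Rightarrow> 'o \<Rightarrow> 'o \<Rightarrow> nat \<Rightarrow> nat \<Rightarrow> bool" where
  "arrow_sim Cat C B A k t \<longleftrightarrow>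
     (\<forall>\<chi> :: 'm set \<Rightarrow> nat. \<chi> ` binom Cat C A \<subseteq> {..<k} \<longrightarrow>
        (\<exists>w\<in>Hom Cat B C.
           finite (\<chi> ` ((\<lambda>f. cls Cat A (cmp Cat w f)) ` Hom Cat A B)) \<and>
           card (\<chi> ` ((\<lambda>f. cls Cat A (cmp Cat w f)) ` Hom Cat A B)) \<le> t))"

definition ramsey_deg_sim :: "('o, 'm) cat \<Rightarrow> 'o \<Rightarrow> enat" where
  "ramsey_deg_sim Cat A =
     (let P = (\<lambda>n. 0 < n \<and> (\<forall>k\<ge>2. \<forall>B\<in>Ob Cat. \<exists>C\<in>Ob Cat. arrow_sim Cat C B A k n))
      in if \<exists>n. P n then enat (LEAST n. P n) else \<infinity>)"

end

theory Submission
  imports Defs "HOL-Library.FuncSet"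
begin

(* Colour a pair (f1, f2) with k colours. First colour f1 by its row, the function
   f2 \<mapsto> \<chi> (f1, f2) on Hom(A2, D2); this uses k ^ |Hom(A2, D2)| colours, so a suitable D1
   yields w1 on whose copy of Hom(A1, B1) at most t1 rows occur. Then colour f2 by its column,
   the values of these rows at f2; this uses at most k ^ t1 colours, so a suitable D2 (chosen
   first) yields w2 on whose copy at most t2 columns occur. On the copy of (w1, w2) the colour
   of (f1, f2) is determined by the row of f1 and the column of f2, so at most t1 * t2 colours
   occur. Classes modulo automorphisms in the product are products of classes, so the same
   argument applies to them. *)

lemma image_Times_factor:
  assumes "\<And>x y. x \<in> A \<Longrightarrow> y \<in> B \<Longrightarrow> h (x, y) = g (f1 x) (f2 y)"
  shows "h ` (A \<times> B) = case_prod g ` (f1 ` A \<times> f2 ` B)"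
proof -
  have "h ` (A \<times> B) = (case_prod g \<circ> map_prod f1 f2) ` (A \<times> B)"
    using assms by (intro image_cong) auto
  then show ?thesis by (simp only: image_comp[symmetric] map_prod_surj_on[OF refl refl])
qed

lemma card_image_Times_factor_le:
  assumes "finite (f1 ` A)" "finite (f2 ` B)"
    and "\<And>x y. x \<in> A \<Longrightarrow> y \<in> B \<Longrightarrow> h (x, y) = g (f1 x) (f2 y)"
  shows "finite (h ` (A \<times> B))" "card (h ` (A \<times> B)) \<le> card (f1 ` A) * card (f2 ` B)"
proof -
  have "h ` (A \<times> B) = case_prod g ` (f1 ` A \<times> f2 ` B)"
    using assms(3) by (rule image_Times_factor)
  then show "finite (h ` (A \<times> B))" "card (h ` (A \<times> B)) \<le> card (f1 ` A) * card (f2 ` B)"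
    using assms(1,2) card_image_le[of "f1 ` A \<times> f2 ` B" "case_prod g"]
    by (simp_all add: card_cartesian_product)
qed

(* Abstract form of C \<rightarrow> (B)^A_{k,t}: X is the set being coloured, W = hom(B, C), and T w \<subseteq> X
   is the copy carried by w. *)
definition colour_arrow :: "'x set \<Rightarrow> ('w \<Rightarrow> 'x set) \<Rightarrow> 'w set \<Rightarrow> nat \<Rightarrow> nat \<Rightarrow> bool" where
  "colour_arrow X T W k t \<longleftrightarrow> (\<forall>\<chi>::'x \<Rightarrow> nat. \<chi> ` X \<subseteq> {..<k} \<longrightarrow>
      (\<exists>w\<in>W. finite (\<chi> ` T w) \<and> card (\<chi> ` T w) \<le> t))"

lemma colour_arrow_palette:
  fixes \<chi> :: "'x \<Rightarrow> 'y"
  assumes arrow: "colour_arrow X T W k t" and "finite Y" "card Y \<le> k"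
    and \<chi>: "\<chi> ` X \<subseteq> Y" and T: "\<forall>w\<in>W. T w \<subseteq> X"
  shows "\<exists>w\<in>W. card (\<chi> ` T w) \<le> t"
proof -
  obtain h where h: "bij_betw h Y {0..<card Y}"
    using ex_bij_betw_finite_nat[OF \<open>finite Y\<close>] by blast
  have "(h \<circ> \<chi>) ` X \<subseteq> {..<k}"
    using \<chi> bij_betw_apply[OF h] \<open>card Y \<le> k\<close> by fastforce
  then obtain w where w: "w \<in> W" "card ((h \<circ> \<chi>) ` T w) \<le> t"
    using arrow unfolding colour_arrow_def by blast
  have "inj_on h (\<chi> ` T w)"
    using bij_betw_imp_inj_on[OF h] \<chi> T w(1) by (blast intro: inj_on_subset)
  then have "card (\<chi> ` T w) = card ((h \<circ> \<chi>) ` T w)"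
    by (metis card_image image_comp)
  with w show ?thesis by metis
qed

lemma colour_arrow_image:
  fixes g :: "'x \<Rightarrow> 'y"
  assumes "colour_arrow X T W k t"
  shows "colour_arrow (g ` X) (\<lambda>w. g ` T w) W k t"
  unfolding colour_arrow_def
proof (intro allI impI)
  fix \<chi> :: "'y \<Rightarrow> nat"
  assume "\<chi> ` g ` X \<subseteq> {..<k}"
  then have "(\<chi> \<circ> g) ` X \<subseteq> {..<k}" by (simp add: image_comp)
  then show "\<exists>w\<in>W. finite (\<chi> ` g ` T w) \<and> card (\<chi> ` g ` T w) \<le> t"
    using assms unfolding colour_arrow_def by (simp add: image_comp)
qed

lemma colour_arrow_funcset_palette:
  assumes arrow: "colour_arrow X T W K t" and "finite I" "k ^ card I \<le> K"
    and "\<chi> ` X \<subseteq> I \<rightarrow>\<^sub>E {..<k}" and "\<forall>w\<in>W. T w \<subseteq> X"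
  shows "\<exists>w\<in>W. card (\<chi> ` T w) \<le> t"
  using assms by (intro colour_arrow_palette[OF arrow]) (simp_all add: finite_PiE card_PiE)

lemma colour_arrow_product:
  fixes X1 :: "'a set" and X2 :: "'b set"
  assumes "0 < k" "finite X2"
    and arrow1: "colour_arrow X1 T1 W1 K t1" and K: "k ^ card X2 \<le> K"
    and arrow2: "colour_arrow X2 T2 W2 (k ^ t1) t2"
    and T1: "\<forall>w\<in>W1. T1 w \<subseteq> X1" and T2: "\<forall>w\<in>W2. T2 w \<subseteq> X2"
  shows "colour_arrow (X1 \<times> X2) (\<lambda>(w1, w2). T1 w1 \<times> T2 w2) (W1 \<times> W2) k (t1 * t2)"
  unfolding colour_arrow_def
proof (intro allI impI)
  fix \<chi> :: "'a \<times> 'b \<Rightarrow> nat"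
  assume \<chi>: "\<chi> ` (X1 \<times> X2) \<subseteq> {..<k}"
  define row where "row x1 = restrict (\<lambda>x2. \<chi> (x1, x2)) X2" for x1
  have row: "row ` X1 \<subseteq> X2 \<rightarrow>\<^sub>E {..<k}"
  proof (intro image_subsetI PiE_I)
    fix x1 x2 assume "x1 \<in> X1" "x2 \<in> X2"
    then show "row x1 x2 \<in> {..<k}" using \<chi> by (auto simp: row_def)
  qed (simp add: row_def)
  obtain w1 where w1: "w1 \<in> W1" "card (row ` T1 w1) \<le> t1"
    using colour_arrow_funcset_palette[OF arrow1 \<open>finite X2\<close> K row T1] by blast
  define S where "S = row ` T1 w1"
  have S: "S \<subseteq> X2 \<rightarrow>\<^sub>E {..<k}"
    using T1 w1(1) row unfolding S_def by blast
  then have "finite S"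
    using \<open>finite X2\<close> by (blast intro: finite_subset finite_PiE)
  define column where "column x2 = restrict (\<lambda>r. r x2) S" for x2
  have column: "column ` X2 \<subseteq> S \<rightarrow>\<^sub>E {..<k}"
  proof (intro image_subsetI PiE_I)
    fix x2 r assume "x2 \<in> X2" "r \<in> S"
    then show "column x2 r \<in> {..<k}"
      using S by (auto simp: column_def dest: PiE_mem)
  qed (simp add: column_def)
  have "k ^ card S \<le> k ^ t1"
    using \<open>0 < k\<close> w1(2) by (simp add: S_def power_increasing)
  then obtain w2 where w2: "w2 \<in> W2" "card (column ` T2 w2) \<le> t2"
    using colour_arrow_funcset_palette[OF arrow2 \<open>finite S\<close> _ column T2] by blast
  have "finite (row ` T1 w1)"
    using \<open>finite S\<close> by (simp add: S_def)
  moreover have "finite (column ` T2 w2)"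
    using T2 w2(1) \<open>finite X2\<close> by (blast intro: finite_subset)
  moreover have "\<chi> (x1, x2) = column x2 (row x1)" if "x1 \<in> T1 w1" "x2 \<in> T2 w2" for x1 x2
    using that T2 w2(1) by (auto simp: column_def row_def S_def)
  ultimately have "finite (\<chi> ` (T1 w1 \<times> T2 w2))"
    and "card (\<chi> ` (T1 w1 \<times> T2 w2)) \<le> card (row ` T1 w1) * card (column ` T2 w2)"
    using card_image_Times_factor_le[of row "T1 w1" column "T2 w2" \<chi> "\<lambda>r c. c r"] by blast+
  moreover have "card (row ` T1 w1) * card (column ` T2 w2) \<le> t1 * t2"
    using w1(2) w2(2) by (rule mult_le_mono)
  ultimately show "\<exists>w\<in>W1 \<times> W2. finite (\<chi> ` (case w of (w1, w2) \<Rightarrow> T1 w1 \<times> T2 w2))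
      \<and> card (\<chi> ` (case w of (w1, w2) \<Rightarrow> T1 w1 \<times> T2 w2)) \<le> t1 * t2"
    using w1(1) w2(1) by (intro bexI[of _ "(w1, w2)"]) simp_all
qed

lemma Hom_prod_cat: "Hom (prod_cat C1 C2) (A1, A2) (B1, B2) = Hom C1 A1 B1 \<times> Hom C2 A2 B2"
  by (simp add: prod_cat_def)

lemma cmp_prod_cat: "cmp (prod_cat C1 C2) (g1, g2) (f1, f2) = (cmp C1 g1 f1, cmp C2 g2 f2)"
  by (simp add: prod_cat_def)

lemma Aut_prod_cat: "Aut (prod_cat C1 C2) (A1, A2) = Aut C1 A1 \<times> Aut C2 A2"
  by (auto simp: Aut_def prod_cat_def)

lemma cls_prod_cat: "cls (prod_cat C1 C2) (A1, A2) (f1, f2) = cls C1 A1 f1 \<times> cls C2 A2 f2"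
proof -
  have "(\<lambda>\<alpha>. cmp (prod_cat C1 C2) (f1, f2) \<alpha>) = map_prod (cmp C1 f1) (cmp C2 f2)"
    by (auto simp: cmp_prod_cat)
  then show ?thesis
    unfolding cls_def Aut_prod_cat by (simp add: map_prod_surj_on)
qed

lemma cmp_in_Hom:
  assumes "is_category C" "A \<in> Ob C" "B \<in> Ob C" "D \<in> Ob C" "f \<in> Hom C A B" "g \<in> Hom C B D"
  shows "cmp C g f \<in> Hom C A D"
  using assms unfolding is_category_def by blast

definition quotient_arrow ::
    "('o, 'm) cat \<Rightarrow> ('m \<Rightarrow> 'q) \<Rightarrow> 'o \<Rightarrow> 'o \<Rightarrow> 'o \<Rightarrow> nat \<Rightarrow> nat \<Rightarrow> bool" where
  "quotient_arrow C q D B A k t \<longleftrightarrow>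
     colour_arrow (q ` Hom C A D) (\<lambda>w. (\<lambda>f. q (cmp C w f)) ` Hom C A B) (Hom C B D) k t"

lemma arrow_eq_quotient_arrow: "arrow C D B A k t = quotient_arrow C id D B A k t"
  by (simp add: arrow_def quotient_arrow_def colour_arrow_def)

lemma arrow_sim_eq_quotient_arrow: "arrow_sim C D B A k t = quotient_arrow C (cls C A) D B A k t"
  by (simp add: arrow_sim_def quotient_arrow_def colour_arrow_def binom_def)

lemma quotient_arrow_prod_cat:
  assumes "is_category C1" "is_category C2"
    and "A1 \<in> Ob C1" "B1 \<in> Ob C1" "D1 \<in> Ob C1" "A2 \<in> Ob C2" "B2 \<in> Ob C2" "D2 \<in> Ob C2"
    and "finite (Hom C2 A2 D2)" "0 < k"
    and arrow1: "quotient_arrow C1 q1 D1 B1 A1 K t1" and K: "k ^ card (q2 ` Hom C2 A2 D2) \<le> K"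
    and arrow2: "quotient_arrow C2 q2 D2 B2 A2 (k ^ t1) t2"
    and q: "\<And>f1 f2. q (f1, f2) = g (q1 f1) (q2 f2)"
  shows "quotient_arrow (prod_cat C1 C2) q (D1, D2) (B1, B2) (A1, A2) k (t1 * t2)"
proof -
  define T1 where "T1 = (\<lambda>w1. (\<lambda>f. q1 (cmp C1 w1 f)) ` Hom C1 A1 B1)"
  define T2 where "T2 = (\<lambda>w2. (\<lambda>f. q2 (cmp C2 w2 f)) ` Hom C2 A2 B2)"
  have "colour_arrow (q1 ` Hom C1 A1 D1 \<times> q2 ` Hom C2 A2 D2) (\<lambda>(w1, w2). T1 w1 \<times> T2 w2)
      (Hom C1 B1 D1 \<times> Hom C2 B2 D2) k (t1 * t2)"
  proof (rule colour_arrow_product[OF \<open>0 < k\<close> _ _ K])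
    show "colour_arrow (q1 ` Hom C1 A1 D1) T1 (Hom C1 B1 D1) K t1"
      using arrow1 by (simp add: quotient_arrow_def T1_def)
    show "colour_arrow (q2 ` Hom C2 A2 D2) T2 (Hom C2 B2 D2) (k ^ t1) t2"
      using arrow2 by (simp add: quotient_arrow_def T2_def)
    show "\<forall>w\<in>Hom C1 B1 D1. T1 w \<subseteq> q1 ` Hom C1 A1 D1"
      using cmp_in_Hom[OF \<open>is_category C1\<close> \<open>A1 \<in> Ob C1\<close> \<open>B1 \<in> Ob C1\<close> \<open>D1 \<in> Ob C1\<close>]
      by (auto simp: T1_def)
    show "\<forall>w\<in>Hom C2 B2 D2. T2 w \<subseteq> q2 ` Hom C2 A2 D2"
      using cmp_in_Hom[OF \<open>is_category C2\<close> \<open>A2 \<in> Ob C2\<close> \<open>B2 \<in> Ob C2\<close> \<open>D2 \<in> Ob C2\<close>]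
      by (auto simp: T2_def)
  qed (use \<open>finite (Hom C2 A2 D2)\<close> in simp)
  from colour_arrow_image[OF this, of "case_prod g"]
  have "colour_arrow (case_prod g ` (q1 ` Hom C1 A1 D1 \<times> q2 ` Hom C2 A2 D2))
      (\<lambda>(w1, w2). case_prod g ` (T1 w1 \<times> T2 w2)) (Hom C1 B1 D1 \<times> Hom C2 B2 D2) k (t1 * t2)"
    by (simp add: case_prod_unfold)
  moreover have "q ` (Hom C1 A1 D1 \<times> Hom C2 A2 D2)
      = case_prod g ` (q1 ` Hom C1 A1 D1 \<times> q2 ` Hom C2 A2 D2)"
    by (rule image_Times_factor) (rule q)
  moreover have "(\<lambda>w. (\<lambda>f. q (cmp (prod_cat C1 C2) w f)) ` (Hom C1 A1 B1 \<times> Hom C2 A2 B2))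
      = (\<lambda>(w1, w2). case_prod g ` (T1 w1 \<times> T2 w2))"
    unfolding T1_def T2_def by (intro ext, clarify, rule image_Times_factor) (simp add: q cmp_prod_cat)
  ultimately show ?thesis
    unfolding quotient_arrow_def Hom_prod_cat by simp
qed

definition ramsey_bound :: "('o, 'm) cat \<Rightarrow> ('m \<Rightarrow> 'q) \<Rightarrow> 'o \<Rightarrow> nat \<Rightarrow> bool" where
  "ramsey_bound C q A t \<longleftrightarrow> (\<forall>k\<ge>2. \<forall>B\<in>Ob C. \<exists>D\<in>Ob C. quotient_arrow C q D B A k t)"

lemma ramsey_bound_prod_cat:
  assumes "is_category C1" "is_category C2"
    and finite_Hom2: "\<forall>A\<in>Ob C2. \<forall>B\<in>Ob C2. finite (Hom C2 A B)"
    and "A1 \<in> Ob C1" "A2 \<in> Ob C2"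
    and bound1: "ramsey_bound C1 q1 A1 t1" and bound2: "ramsey_bound C2 q2 A2 t2" and "0 < t1"
    and q: "\<And>f1 f2. q (f1, f2) = g (q1 f1) (q2 f2)"
  shows "ramsey_bound (prod_cat C1 C2) q (A1, A2) (t1 * t2)"
  unfolding ramsey_bound_def
proof (intro allI impI ballI)
  fix k :: nat and B
  assume "2 \<le> k" and "B \<in> Ob (prod_cat C1 C2)"
  then obtain B1 B2 where B: "B = (B1, B2)" "B1 \<in> Ob C1" "B2 \<in> Ob C2"
    by (auto simp: prod_cat_def)
  have "2 \<le> k ^ t1"
    using \<open>2 \<le> k\<close> \<open>0 < t1\<close> self_le_power[of k t1] by linarith
  then obtain D2 where D2: "D2 \<in> Ob C2" "quotient_arrow C2 q2 D2 B2 A2 (k ^ t1) t2"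
    using bound2 B(3) unfolding ramsey_bound_def by blast
  define K where "K = max 2 (k ^ card (q2 ` Hom C2 A2 D2))"
  obtain D1 where D1: "D1 \<in> Ob C1" "quotient_arrow C1 q1 D1 B1 A1 K t1"
    using bound1 B(2) unfolding ramsey_bound_def K_def by (meson max.cobounded1)
  have "quotient_arrow (prod_cat C1 C2) q (D1, D2) (B1, B2) (A1, A2) k (t1 * t2)"
    using assms(1,2,4,5) B(2,3) D1 D2 finite_Hom2 \<open>2 \<le> k\<close>
    by (intro quotient_arrow_prod_cat[where K = K and g = g]) (auto simp: K_def q)
  then show "\<exists>D\<in>Ob (prod_cat C1 C2). quotient_arrow (prod_cat C1 C2) q D B (A1, A2) k (t1 * t2)"
    using B(1) D1(1) D2(1) by (auto simp: prod_cat_def)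
qed

definition least_enat :: "(nat \<Rightarrow> bool) \<Rightarrow> enat" where
  "least_enat P = (if \<exists>n. P n then enat (LEAST n. P n) else \<infinity>)"

lemma ramsey_deg_eq_least_enat:
  "ramsey_deg C A = least_enat (\<lambda>t. 0 < t \<and> ramsey_bound C id A t)"
  by (simp add: ramsey_deg_def least_enat_def ramsey_bound_def arrow_eq_quotient_arrow Let_def)

lemma ramsey_deg_sim_eq_least_enat:
  "ramsey_deg_sim C A = least_enat (\<lambda>t. 0 < t \<and> ramsey_bound C (cls C A) A t)"
  by (simp add: ramsey_deg_sim_def least_enat_def ramsey_bound_def arrow_sim_eq_quotient_arrow
      Let_def)

lemma least_enat_le: "P n \<Longrightarrow> least_enat P \<le> enat n"
  unfolding least_enat_def by (auto intro: Least_le)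

lemma least_enat_finite:
  assumes "least_enat P \<noteq> \<infinity>"
  obtains n where "least_enat P = enat n" "P n"
proof -
  have "\<exists>n. P n" using assms unfolding least_enat_def by presburger
  then show thesis using that LeastI_ex[of P] unfolding least_enat_def by simp
qed

lemma least_enat_nonzero: "\<not> P 0 \<Longrightarrow> least_enat P \<noteq> 0"
  by (metis least_enat_finite enat_0_iff(1) infinity_ne_i0)

lemma least_enat_mult_le:
  assumes "\<And>n1 n2. P1 n1 \<Longrightarrow> P2 n2 \<Longrightarrow> P (n1 * n2)" and "\<not> P1 0" "\<not> P2 0"
  shows "least_enat P \<le> least_enat P1 * least_enat P2"
proof (cases "least_enat P1 = \<infinity> \<or> least_enat P2 = \<infinity>")
  case True
  then have "least_enat P1 * least_enat P2 = \<infinity>"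
    using least_enat_nonzero[of P1] least_enat_nonzero[of P2] assms(2,3)
    by (auto simp: imult_is_infinity)
  then show ?thesis by simp
next
  case False
  then obtain n1 n2 where "least_enat P1 = enat n1" "P1 n1" "least_enat P2 = enat n2" "P2 n2"
    by (metis least_enat_finite)
  then show ?thesis
    using least_enat_le[of P "n1 * n2"] assms(1) by simp
qed

theorem theorem3p3:
  fixes C1 :: "('o1, 'm1) cat" and C2 :: "('o2, 'm2) cat"
  assumes "is_category C1" and "is_category C2"
    and "all_mono C1" and "all_mono C2"
    and "\<forall>A\<in>Ob C1. \<forall>B\<in>Ob C1. finite (Hom C1 A B)"
    and "\<forall>A\<in>Ob C2. \<forall>B\<in>Ob C2. finite (Hom C2 A B)"
    and "\<forall>A\<in>Ob C1. ramsey_deg C1 A \<noteq> \<infinity>"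
    and "\<forall>A\<in>Ob C2. ramsey_deg C2 A \<noteq> \<infinity>"
    and "A1 \<in> Ob C1" and "A2 \<in> Ob C2"
  shows "ramsey_deg (prod_cat C1 C2) (A1, A2) \<le> ramsey_deg C1 A1 * ramsey_deg C2 A2
    \<and> ramsey_deg_sim (prod_cat C1 C2) (A1, A2) \<le> ramsey_deg_sim C1 A1 * ramsey_deg_sim C2 A2"
  unfolding ramsey_deg_eq_least_enat ramsey_deg_sim_eq_least_enat
proof (intro conjI; rule least_enat_mult_le)
  fix n1 n2
  assume n1: "0 < n1 \<and> ramsey_bound C1 id A1 n1" and n2: "0 < n2 \<and> ramsey_bound C2 id A2 n2"
  have "ramsey_bound (prod_cat C1 C2) id (A1, A2) (n1 * n2)"
    by (rule ramsey_bound_prod_cat[OF assms(1,2,6,9,10) n1[THEN conjunct2] n2[THEN conjunct2]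
          n1[THEN conjunct1], where g = Pair]) simp
  with n1 n2 show "0 < n1 * n2 \<and> ramsey_bound (prod_cat C1 C2) id (A1, A2) (n1 * n2)"
    by simp
next
  fix n1 n2
  assume n1: "0 < n1 \<and> ramsey_bound C1 (cls C1 A1) A1 n1"
    and n2: "0 < n2 \<and> ramsey_bound C2 (cls C2 A2) A2 n2"
  have "ramsey_bound (prod_cat C1 C2) (cls (prod_cat C1 C2) (A1, A2)) (A1, A2) (n1 * n2)"
    by (rule ramsey_bound_prod_cat[OF assms(1,2,6,9,10) n1[THEN conjunct2] n2[THEN conjunct2]
          n1[THEN conjunct1], where g = "\<lambda>c1 c2. c1 \<times> c2"]) (rule cls_prod_cat)
  with n1 n2 show "0 < n1 * n2
      \<and> ramsey_bound (prod_cat C1 C2) (cls (prod_cat C1 C2) (A1, A2)) (A1, A2) (n1 * n2)"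
    by simp
qed simp_all

end
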